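(* For all integers $m\ge 2$ and $k\ge 1$, the complete $k$-partite graph $K_{m*k}$ (with $k$ parts, each of size $m$) satisfies \[\mathrm{ch}(K_{m*k})\ \ge\ 2k-\left\lceil\frac{2k-1}{m}\right\rceil\ \ge\ \left\lfloor\frac{2k(m-1)}{m}\right\rfloor .\]
   Context: A list assignment $L$ for a graph $G$ assigns to each vertex $v$ a set $L(v)$ of colors. An $L$-coloring is a proper coloring $f$ of $G$ with $f(v)\in L(v)$ for all $v$. $G$ is $r$-choosable if it has an $L$-coloring for every list assignment $L$ with $|L(v)|\ge r$ for all $v$; the choice number $\mathrm{ch}(G)$ is the least such $r$. $K_{m*k}$ denotes the complete multipartite graph with $k$ parts of size $m$. *)

theory Defs
  imports Complex_Main
begin

definition L_coloring :: "'v set \<Rightarrow> ('v \<Rightarrow> 'v \<Rightarrow> bool) \<Rightarrow> ('v \<Rightarrow> nat set) \<Rightarrow> ('v \<Rightarrow> nat) \<Rightarrow> bool" where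
  "L_coloring V E L f \<longleftrightarrow> (\<forall>v\<in>V. f v \<in> L v) \<and> (\<forall>u\<in>V. \<forall>v\<in>V. E u v \<longrightarrow> f u \<noteq> f v)"

definition choosable :: "'v set \<Rightarrow> ('v \<Rightarrow> 'v \<Rightarrow> bool) \<Rightarrow> nat \<Rightarrow> bool" where
  "choosable V E r \<longleftrightarrow>
     (\<forall>L. (\<forall>v\<in>V. finite (L v) \<and> card (L v) \<ge> r) \<longrightarrow> (\<exists>f. L_coloring V E L f))"

definition choice_number :: "'v set \<Rightarrow> ('v \<Rightarrow> 'v \<Rightarrow> bool) \<Rightarrow> nat" where
  "choice_number V E = (LEAST r. choosable V E r)"

text \<open>Complete multipartite graph K_{m*k}: vertices (i,j) with part index i < k and
position j < m; two vertices are adjacent iff they lie in different parts.\<close>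

definition Kmk_vertices :: "nat \<Rightarrow> nat \<Rightarrow> (nat \<times> nat) set" where
  "Kmk_vertices m k = {0..<k} \<times> {0..<m}"

definition Kmk_edge :: "(nat \<times> nat) \<Rightarrow> (nat \<times> nat) \<Rightarrow> bool" where
  "Kmk_edge u v \<longleftrightarrow> fst u \<noteq> fst v"

end

theory Submission
  imports Defs
begin

text \<open>Split the colours \<open>{0..<2k-1}\<close> into \<open>m\<close> consecutive blocks of length
\<open>c = \<lceil>(2k-1)/m\<rceil>\<close> and give vertex \<open>(i,j)\<close> every colour outside block \<open>j\<close>. A part coloured
with a single colour \<open>x\<close> would contain the vertex whose list misses the block of \<open>x\<close>, so
every part needs two colours; distinct parts need disjoint colour sets, and \<open>2k\<close> colours
do not fit into \<open>2k-1\<close>. Hence these lists of size \<open>2k-1-c\<close> admit no colouring.\<close>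

lemma choosable_mono:
  assumes "choosable V E r" and "r \<le> s"
  shows "choosable V E s"
  using assms unfolding choosable_def by (meson le_trans)

lemma exists_inj_on_choice:
  assumes "finite V" and "card V \<le> r" and "\<forall>v\<in>V. finite (L v) \<and> r \<le> card (L v)"
  shows "\<exists>f. (\<forall>v\<in>V. f v \<in> L v) \<and> inj_on f V"
  using assms
proof (induction V rule: finite_induct)
  case empty
  then show ?case by auto
next
  case (insert x F)
  then obtain f where f: "\<forall>v\<in>F. f v \<in> L v" "inj_on f F" by auto
  have "card (f ` F) < card (L x)"
    using insert card_image_le[of F f] by auto
  then obtain y where y: "y \<in> L x" "y \<notin> f ` F"
    by (meson card_mono finite_imageI insert.hyps(1) not_less subsetI)
  have "(\<forall>v\<in>insert x F. (f(x := y)) v \<in> L v) \<and> inj_on (f(x := y)) (insert x F)"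
    using f y insert.hyps by (auto simp: inj_on_def)
  then show ?case by blast
qed

lemma choosable_card:
  assumes "finite V" and "\<forall>v\<in>V. \<not> E v v"
  shows "choosable V E (card V)"
  unfolding choosable_def
proof (intro allI impI)
  fix L :: "'a \<Rightarrow> nat set"
  assume "\<forall>v\<in>V. finite (L v) \<and> card V \<le> card (L v)"
  then obtain f where "\<forall>v\<in>V. f v \<in> L v" "inj_on f V"
    using exists_inj_on_choice[OF assms(1) order_refl] by blast
  then have "L_coloring V E L f"
    using assms(2) unfolding L_coloring_def inj_on_def by blast
  then show "\<exists>f. L_coloring V E L f" by blast
qed

text \<open>The greedy bound \<open>choosable_card\<close> guarantees that the \<open>LEAST\<close> in
\<open>choice_number\<close> is attained, so non-choosability really bounds it from below.\<close>

lemma less_choice_number_if_not_choosable: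
  assumes "finite V" and "\<forall>v\<in>V. \<not> E v v" and "\<not> choosable V E r"
  shows "r < choice_number V E"
proof -
  have "choosable V E (choice_number V E)"
    unfolding choice_number_def using choosable_card[of V E] assms(1,2) by (blast intro: LeastI)
  then show ?thesis
    using assms(3) choosable_mono not_le by blast
qed

definition block_avoiding_lists :: "nat \<Rightarrow> nat \<Rightarrow> nat \<times> nat \<Rightarrow> nat set" where
  "block_avoiding_lists c n v = {x. x < n \<and> x div c \<noteq> snd v}"

lemma card_block_avoiding_lists:
  assumes "c \<ge> 1"
  shows "n - c \<le> card (block_avoiding_lists c n v)"
proof -
  let ?B = "{x. x < n \<and> x div c = snd v}"
  have "?B \<subseteq> {snd v * c..<snd v * c + c}"
  proof
    fix x
    assume "x \<in> ?B"
    then have "x = snd v * c + x mod c"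
      using div_mult_mod_eq[of x c] by simp
    moreover have "x mod c < c"
      using assms by simp
    ultimately show "x \<in> {snd v * c..<snd v * c + c}"
      unfolding atLeastLessThan_iff by linarith
  qed
  then have "card ?B \<le> c"
    using card_mono[of "{snd v * c..<snd v * c + c}" ?B] by simp
  moreover have "block_avoiding_lists c n v = {0..<n} - ?B"
    unfolding block_avoiding_lists_def by auto
  moreover have "card ({0..<n} - ?B) = n - card ?B"
    by (subst card_Diff_subset) auto
  ultimately show ?thesis
    by simp
qed

lemma Kmk_colour_sets_disjoint:
  assumes "L_coloring (Kmk_vertices m k) Kmk_edge L f" and "i < k" and "i' < k" and "i \<noteq> i'"
  shows "f ` ({i} \<times> {0..<m}) \<inter> f ` ({i'} \<times> {0..<m}) = {}"
  using assms unfolding L_coloring_def Kmk_vertices_def Kmk_edge_def by fastforce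

lemma Kmk_part_uses_two_colours:
  assumes f: "L_coloring (Kmk_vertices m k) Kmk_edge (block_avoiding_lists c n) f"
    and "i < k" and "0 < m" and "1 \<le> c" and "n \<le> m * c"
  shows "2 \<le> card (f ` ({i} \<times> {0..<m}))"
proof (rule ccontr)
  let ?S = "f ` ({i} \<times> {0..<m})"
  assume "\<not> 2 \<le> card ?S"
  moreover have "?S \<noteq> {}" using \<open>0 < m\<close> by auto
  moreover have "finite ?S"
    by simp
  ultimately have "card ?S = 1"
    by (metis One_nat_def card_0_eq less_2_cases not_le)
  then obtain x where x: "?S = {x}"
    by (rule card_1_singletonE)
  have colour_in_list: "f (i, j) \<in> block_avoiding_lists c n (i, j)" if "j < m" for j
    using f \<open>i < k\<close> that unfolding L_coloring_def Kmk_vertices_def by auto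
  have single_colour: "f (i, j) = x" if "j < m" for j
  proof -
    have "f (i, j) \<in> ?S"
      using that by auto
    with x show ?thesis
      by simp
  qed
  have "x < m * c"
    using single_colour[OF \<open>0 < m\<close>] colour_in_list[OF \<open>0 < m\<close>] \<open>n \<le> m * c\<close>
    unfolding block_avoiding_lists_def by simp
  then have "x div c < m"
    using \<open>1 \<le> c\<close> by (simp add: div_less_iff_less_mult)
  then show False
    using single_colour[of "x div c"] colour_in_list[of "x div c"]
    unfolding block_avoiding_lists_def by auto
qed

lemma Kmk_not_choosable:
  assumes "0 < m" and "1 \<le> c" and "n \<le> m * c" and "n < 2 * k"
  shows "\<not> choosable (Kmk_vertices m k) Kmk_edge (n - c)"
proof
  assume "choosable (Kmk_vertices m k) Kmk_edge (n - c)"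
  then obtain f where f: "L_coloring (Kmk_vertices m k) Kmk_edge (block_avoiding_lists c n) f"
    using card_block_avoiding_lists[OF \<open>1 \<le> c\<close>]
    unfolding choosable_def block_avoiding_lists_def by force
  let ?S = "\<lambda>i. f ` ({i} \<times> {0..<m})"
  have "2 * k = (\<Sum>i<k. 2)"
    by simp
  also have "\<dots> \<le> (\<Sum>i<k. card (?S i))"
    using Kmk_part_uses_two_colours[OF f _ assms(1-3)] by (intro sum_mono) simp
  also have "\<dots> = card (\<Union>i<k. ?S i)"
    using Kmk_colour_sets_disjoint[OF f] by (intro card_UN_disjoint[symmetric]) auto
  also have "\<dots> \<le> card {0..<n}"
    using f unfolding L_coloring_def Kmk_vertices_def block_avoiding_lists_def
    by (intro card_mono) auto
  finally show False
    using \<open>n < 2 * k\<close> by simp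
qed

lemma nat_ceiling_divide_bounds:
  fixes n m :: nat
  assumes "0 < n" and "0 < m"
  shows "1 \<le> nat \<lceil>real n / real m\<rceil>" and "nat \<lceil>real n / real m\<rceil> \<le> n"
    and "n \<le> m * nat \<lceil>real n / real m\<rceil>"
proof -
  have "0 < real n / real m"
    using assms by simp
  then show "1 \<le> nat \<lceil>real n / real m\<rceil>"
    by linarith
  have "real n / real m \<le> real n"
    using assms by (simp add: divide_le_eq)
  then show "nat \<lceil>real n / real m\<rceil> \<le> n"
    by (simp add: ceiling_le_iff nat_le_iff)
  have "real n = real m * (real n / real m)"
    using assms by simp
  also have "\<dots> \<le> real m * of_int \<lceil>real n / real m\<rceil>"
    by (rule mult_left_mono) simp_all
  also have "\<dots> = real (m * nat \<lceil>real n / real m\<rceil>)"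
    using \<open>0 < real n / real m\<close> by simp
  finally show "n \<le> m * nat \<lceil>real n / real m\<rceil>"
    by (simp only: of_nat_le_iff)
qed

lemma floor_add_ceiling_le:
  fixes y z :: real
  assumes "y + z \<le> of_int N"
  shows "\<lfloor>y\<rfloor> + \<lceil>z\<rceil> \<le> N"
proof -
  have "of_int (\<lfloor>y\<rfloor> + \<lceil>z\<rceil>) < y + z + 1"
    using of_int_floor_le[of y] ceiling_correct[of z] by simp linarith
  with assms show ?thesis
    by linarith
qed

theorem mainTheorem2:
  fixes m k :: nat
  assumes "m \<ge> 2" and "k \<ge> 1"
  shows "real (choice_number (Kmk_vertices m k) Kmk_edge)
           \<ge> real (2 * k) - of_int \<lceil>(2 * real k - 1) / real m\<rceil>
       \<and> real (2 * k) - of_int \<lceil>(2 * real k - 1) / real m\<rceil>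
           \<ge> of_int \<lfloor>2 * real k * (real m - 1) / real m\<rfloor>"
proof
  define n where "n = 2 * k - 1"
  define c where "c = nat \<lceil>real n / real m\<rceil>"
  have n_real: "real n = 2 * real k - 1"
    using \<open>k \<ge> 1\<close> unfolding n_def by auto
  have "0 < n" and "0 < m"
    using assms unfolding n_def by auto
  note c_bounds = nat_ceiling_divide_bounds[OF this, folded c_def]
  have "\<not> choosable (Kmk_vertices m k) Kmk_edge (n - c)"
    using Kmk_not_choosable[of m c n k] c_bounds \<open>0 < m\<close> unfolding n_def by simp
  then have "n - c < choice_number (Kmk_vertices m k) Kmk_edge"
    using less_choice_number_if_not_choosable[of "Kmk_vertices m k" Kmk_edge]
    by (simp add: Kmk_vertices_def Kmk_edge_def)
  then have "real (2 * k) \<le> real (choice_number (Kmk_vertices m k) Kmk_edge) + real c"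
    using c_bounds(2) unfolding n_def by linarith
  moreover have "of_int \<lceil>(2 * real k - 1) / real m\<rceil> = real c"
    using c_bounds(1) n_real unfolding c_def by simp
  ultimately show "real (choice_number (Kmk_vertices m k) Kmk_edge)
      \<ge> real (2 * k) - of_int \<lceil>(2 * real k - 1) / real m\<rceil>"
    by linarith
next
  have "\<lfloor>2 * real k * (real m - 1) / real m\<rfloor> + \<lceil>(2 * real k - 1) / real m\<rceil> \<le> int (2 * k)"
    using assms by (intro floor_add_ceiling_le) (simp add: field_simps)
  then show "real (2 * k) - of_int \<lceil>(2 * real k - 1) / real m\<rceil>
      \<ge> of_int \<lfloor>2 * real k * (real m - 1) / real m\<rfloor>"
    by linarith
qed
end
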